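(* Let $\mathfrak{g}$ be a nilpotent real Lie algebra of dimension $6$, and let $\mathfrak{g}^*=V_1\oplus V_2$ be a coherent splitting of $\mathfrak{g}$. Then $V_1\subset\ker d$ and the derived length of $\mathfrak{g}$ is $1$ or $2$.
   Context: $d\colon\mathfrak{g}^*\to\Lambda^2\mathfrak{g}^*$ is the Chevalley–Eilenberg differential, $d\alpha(X,Y)=-\alpha([X,Y])$, extended to a derivation of $\Lambda^*\mathfrak{g}^*$. A coherent splitting is a decomposition $\mathfrak{g}^*=V_1\oplus V_2$ with $\dim V_1=2$ such that, with $\Lambda^{p,q}=\Lambda^pV_1\otimes\Lambda^qV_2$, $d(\Lambda^{p,q})\subset\Lambda^{p+1,q}+\Lambda^{p+2,q-1}$ for all $p,q$. The derived length is the least $n$ with $\mathcal{D}^n(\mathfrak{g})=0$, where $\mathcal{D}(\mathfrak{g})=[\mathfrak{g},\mathfrak{g}]$. *)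

theory Defs
  imports "HOL-Analysis.Analysis" "HOL-Combinatorics.Permutations"
begin

definition lie_algebra :: "('a::real_vector \<Rightarrow> 'a \<Rightarrow> 'a) \<Rightarrow> bool" where
  "lie_algebra br \<longleftrightarrow> bilinear br \<and> (\<forall>x. br x x = 0) \<and>
     (\<forall>x y z. br x (br y z) + br y (br z x) + br z (br x y) = 0)"

fun lower_central :: "('a::real_vector \<Rightarrow> 'a \<Rightarrow> 'a) \<Rightarrow> nat \<Rightarrow> 'a set" where
  "lower_central br 0 = UNIV"
| "lower_central br (Suc n) = span {br x y | x y. y \<in> lower_central br n}"

definition nilpotent_lie :: "('a::real_vector \<Rightarrow> 'a \<Rightarrow> 'a) \<Rightarrow> bool" where
  "nilpotent_lie br \<longleftrightarrow> (\<exists>n. lower_central br n = {0})"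

fun derived_series :: "('a::real_vector \<Rightarrow> 'a \<Rightarrow> 'a) \<Rightarrow> nat \<Rightarrow> 'a set" where
  "derived_series br 0 = UNIV"
| "derived_series br (Suc n) =
     span {br x y | x y. x \<in> derived_series br n \<and> y \<in> derived_series br n}"

definition derived_length :: "('a::real_vector \<Rightarrow> 'a \<Rightarrow> 'a) \<Rightarrow> nat" where
  "derived_length br = (LEAST n. derived_series br n = {0})"

definition fspan :: "('b \<Rightarrow> real) set \<Rightarrow> ('b \<Rightarrow> real) set" where
  "fspan S = {f. \<exists>n (c::nat \<Rightarrow> real) g. (\<forall>i<n. g i \<in> S) \<and>
                    f = (\<lambda>x. \<Sum>i<n. c i * g i x)}"

definition dual_space :: "('a::real_vector \<Rightarrow> real) set" where
  "dual_space = {f. linear f}"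

definition dual_subspace :: "('a::real_vector \<Rightarrow> real) set \<Rightarrow> bool" where
  "dual_subspace V \<longleftrightarrow> V \<subseteq> dual_space \<and> fspan V = V"

definition dual_dim2 :: "('a::real_vector \<Rightarrow> real) set \<Rightarrow> bool" where
  "dual_dim2 V \<longleftrightarrow> (\<exists>\<alpha> \<beta>. V = fspan {\<alpha>, \<beta>} \<and>
      (\<forall>a b. (\<lambda>x. a * \<alpha> x + b * \<beta> x) = (\<lambda>x. 0) \<longrightarrow> a = 0 \<and> b = 0))"

definition dual_direct_sum :: "('a::real_vector \<Rightarrow> real) set \<Rightarrow> ('a \<Rightarrow> real) set \<Rightarrow> bool" where
  "dual_direct_sum V1 V2 \<longleftrightarrow> dual_subspace V1 \<and> dual_subspace V2 \<and>
     V1 \<inter> V2 = {\<lambda>x. 0} \<and>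
     (\<forall>f\<in>dual_space. \<exists>a\<in>V1. \<exists>b\<in>V2. f = (\<lambda>x. a x + b x))"

text \<open>A k-form on g is represented as a function of a sequence of vectors
  X :: nat \<Rightarrow> g, of which only X 0, ..., X (k-1) are used.
  Wedge product of 1-forms alpha_1 ... alpha_k (determinant convention):
  (alpha_1 \<and> ... \<and> alpha_k)(X_0,...,X_(k-1)) = det (alpha_i (X_j)).\<close>
definition wedge :: "('a \<Rightarrow> real) list \<Rightarrow> (nat \<Rightarrow> 'a) \<Rightarrow> real" where
  "wedge as X = (\<Sum>\<sigma> | \<sigma> permutes {..<length as}.
        of_int (sign \<sigma>) * (\<Prod>i<length as. (as ! i) (X (\<sigma> i))))"

text \<open>Lambda^{p,q} = Lambda^p V1 \<otimes> Lambda^q V2, as a subspace of Lambda^{p+q} g^*.\<close>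
definition bideg :: "('a \<Rightarrow> real) set \<Rightarrow> ('a \<Rightarrow> real) set \<Rightarrow> nat \<Rightarrow> nat
                      \<Rightarrow> ((nat \<Rightarrow> 'a) \<Rightarrow> real) set" where
  "bideg V1 V2 p q = fspan {wedge (as @ bs) | as bs.
      length as = p \<and> set as \<subseteq> V1 \<and> length bs = q \<and> set bs \<subseteq> V2}"

text \<open>Index of the l-th element (0-based) of {0..k} - {i,j}, for i < j.\<close>
definition skip2 :: "nat \<Rightarrow> nat \<Rightarrow> nat \<Rightarrow> nat" where
  "skip2 i j l = (if l < i then l else if l + 1 < j then l + 1 else l + 2)"

text \<open>Chevalley--Eilenberg differential on k-forms (trivial coefficients):
  d omega(X_0,...,X_k) = sum_{i<j} (-1)^(i+j) omega([X_i,X_j], X_0,..^i..^j..,X_k).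
  For k = 1 this gives d alpha(X,Y) = - alpha([X,Y]), and it is the
  derivation extension to the exterior algebra.\<close>
definition CE_d :: "('a \<Rightarrow> 'a \<Rightarrow> 'a) \<Rightarrow> nat \<Rightarrow> ((nat \<Rightarrow> 'a) \<Rightarrow> real)
                     \<Rightarrow> ((nat \<Rightarrow> 'a) \<Rightarrow> real)" where
  "CE_d br k \<omega> X = (\<Sum>i<k+1. \<Sum>j\<in>{i<..k}.
       (-1) ^ (i + j) * \<omega> (\<lambda>m. case m of 0 \<Rightarrow> br (X i) (X j)
                                      | Suc l \<Rightarrow> X (skip2 i j l)))"

definition one_form :: "('a \<Rightarrow> real) \<Rightarrow> (nat \<Rightarrow> 'a) \<Rightarrow> real" where
  "one_form \<alpha> X = \<alpha> (X 0)"

definition coherent_splitting ::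
  "('a::real_vector \<Rightarrow> 'a \<Rightarrow> 'a) \<Rightarrow> ('a \<Rightarrow> real) set \<Rightarrow> ('a \<Rightarrow> real) set \<Rightarrow> bool" where
  "coherent_splitting br V1 V2 \<longleftrightarrow> dual_direct_sum V1 V2 \<and> dual_dim2 V1 \<and>
     (\<forall>p q. \<forall>\<omega>\<in>bideg V1 V2 p q.
        \<exists>a\<in>bideg V1 V2 (p+1) q.
        \<exists>b\<in>(if q = 0 then {\<lambda>X. 0} else bideg V1 V2 (p+2) (q-1)).
          CE_d br (p+q) \<omega> = (\<lambda>X. a X + b X))"

end

theory Submission
  imports Defs
begin

text \<open>Write V1 = span {\<alpha>, \<beta>}. Coherence puts d\<gamma> in \<Lambda>^2 V1 = \<real> \<alpha>\<and>\<beta> for every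
  \<gamma> \<in> V1, so the projection \<pi> = (\<alpha>, \<beta>) of g onto \<real>^2 maps each bracket [x, y] to
  (\<alpha>\<and>\<beta>)(x, y) c for a fixed c \<in> \<real>^2. If c \<noteq> 0 and some bracket has nonzero image, then
  for u with det (\<pi> u, c) \<noteq> 0 every application of ad u multiplies the image of that
  bracket by the same nonzero scalar, contradicting nilpotency. Hence dV1 = 0, i.e. [g, g]
  lies in the common kernel h of V1. For b \<in> V2 coherence puts db in
  \<Lambda>^{1,1} + \<Lambda>^{2,0}, whose elements vanish on h \<times> h; so b, and with it every
  functional, kills [h, h]. Thus h is abelian and the second derived algebra, contained in
  [h, h], is zero.\<close>

lemma wedge_singleton: "wedge [a] X = a (X 0)"
proof -
  have "{..<Suc 0} = {0::nat}" by auto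
  then show ?thesis unfolding wedge_def by simp
qed

lemma wedge_pair: "wedge [a, b] X = a (X 0) * b (X 1) - a (X 1) * b (X 0)"
proof -
  have "wedge [a, b] X = (\<Sum>\<sigma> | \<sigma> permutes insert 0 {1::nat}.
        of_int (sign \<sigma>) * (\<Prod>i<2. ([a, b] ! i) (X (\<sigma> i))))"
    unfolding wedge_def by (simp add: insert_commute lessThan_Suc numeral_2_eq_2)
  also have "\<dots> = (\<Sum>c\<in>insert 0 {1::nat}. \<Sum>q\<in>{p. p permutes {1::nat}}.
        of_int (sign (Transposition.transpose 0 c \<circ> q)) *
        (\<Prod>i<2. ([a, b] ! i) (X ((Transposition.transpose 0 c \<circ> q) i))))"
    by (rule sum_over_permutations_insert) auto
  also have "\<dots> = a (X 0) * b (X 1) - a (X 1) * b (X 0)"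
    by (simp add: sign_swap_id numeral_2_eq_2 lessThan_Suc)
  finally show ?thesis .
qed

lemma one_form_eq_wedge: "one_form a = wedge [a]"
  by (simp add: fun_eq_iff wedge_singleton one_form_def)

lemma CE_d_one_form: "CE_d br 1 (one_form f) X = - f (br (X 0) (X 1))"
proof -
  have "{0<..Suc 0} = {Suc 0}" by auto
  then show ?thesis by (simp add: CE_d_def one_form_def lessThan_Suc)
qed

lemma fspan_base: "g \<in> S \<Longrightarrow> g \<in> fspan S"
  unfolding fspan_def
  by (rule CollectI, rule exI[of _ 1], rule exI[of _ "\<lambda>_. 1"], rule exI[of _ "\<lambda>_. g"]) auto

lemma fspan_vanishing: "\<omega> \<in> fspan S \<Longrightarrow> (\<And>g. g \<in> S \<Longrightarrow> g X = 0) \<Longrightarrow> \<omega> X = 0"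
  unfolding fspan_def by (auto intro!: sum.neutral)

lemma fspan_pairE:
  assumes "f \<in> fspan {\<alpha>, \<beta>}"
  obtains s t where "f = (\<lambda>x. s * \<alpha> x + t * \<beta> x)"
proof -
  obtain n :: nat and c g where g: "\<forall>i<n. g i \<in> {\<alpha>, \<beta>}"
    and f: "f = (\<lambda>x. \<Sum>i<n. c i * g i x)"
    using assms unfolding fspan_def by blast
  define s where "s = (\<Sum>i<n. if g i = \<alpha> then c i else 0)"
  define t where "t = (\<Sum>i<n. if g i = \<alpha> then 0 else c i)"
  have "f x = s * \<alpha> x + t * \<beta> x" for x
  proof -
    have "(\<Sum>i<n. c i * g i x) =
          (\<Sum>i<n. (if g i = \<alpha> then c i else 0) * \<alpha> x + (if g i = \<alpha> then 0 else c i) * \<beta> x)"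
      by (rule sum.cong) (use g in auto)
    then show ?thesis by (simp add: f s_def t_def sum.distrib sum_distrib_right)
  qed
  then show thesis using that by blast
qed

lemma fspan_multiples:
  assumes "f \<in> fspan S" and "\<And>g. g \<in> S \<Longrightarrow> \<exists>k. \<forall>X. g X = k * w X"
  shows "\<exists>K. \<forall>X. f X = K * w X"
proof -
  obtain n :: nat and c g where "\<forall>i<n. g i \<in> S" and f: "f = (\<lambda>X. \<Sum>i<n. c i * g i X)"
    using assms(1) unfolding fspan_def by blast
  then have "\<forall>i<n. \<exists>k. \<forall>X. g i X = k * w X" using assms(2) by blast
  then obtain k where "\<forall>i<n. \<forall>X. g i X = k i * w X" by metis
  then have "f X = (\<Sum>i<n. c i * k i) * w X" for X
    by (simp add: f sum_distrib_right mult.assoc)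
  then show ?thesis by blast
qed

lemma wedge_in_bideg:
  "set as \<subseteq> V1 \<Longrightarrow> set bs \<subseteq> V2 \<Longrightarrow> wedge (as @ bs) \<in> bideg V1 V2 (length as) (length bs)"
  unfolding bideg_def by (rule fspan_base) blast

lemma one_form_in_bideg_1_0: "a \<in> V1 \<Longrightarrow> one_form a \<in> bideg V1 V2 1 0"
  using wedge_in_bideg[of "[a]" V1 "[]" V2] by (simp add: one_form_eq_wedge)

lemma one_form_in_bideg_0_1: "b \<in> V2 \<Longrightarrow> one_form b \<in> bideg V1 V2 0 1"
  using wedge_in_bideg[of "[]" V1 "[b]" V2] by (simp add: one_form_eq_wedge)

lemma bideg_two_form_vanishes_on_annihilator:
  assumes \<omega>: "\<omega> \<in> bideg V1 V2 p q" and "1 \<le> p" "p + q = 2"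
    and annihilated: "\<And>a. a \<in> V1 \<Longrightarrow> a (X 0) = 0 \<and> a (X 1) = 0"
  shows "\<omega> X = 0"
  using \<omega> unfolding bideg_def
proof (rule fspan_vanishing)
  fix g
  assume "g \<in> {wedge (as @ bs) | as bs.
                  length as = p \<and> set as \<subseteq> V1 \<and> length bs = q \<and> set bs \<subseteq> V2}"
  then obtain as bs where g: "g = wedge (as @ bs)"
    and l: "length as = p" "set as \<subseteq> V1" "length bs = q"
    by blast
  obtain a r where as: "as = a # r" using l \<open>1 \<le> p\<close> by (cases as) auto
  have "length (r @ bs) = 1" using l as \<open>p + q = 2\<close> by auto
  then obtain b where "r @ bs = [b]" by (cases "r @ bs") auto
  moreover have "a (X 0) = 0" "a (X 1) = 0" using annihilated l as by auto
  ultimately show "g X = 0" using g as by (simp add: wedge_pair)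
qed

lemma wedge_pair_in_fspan_pair:
  assumes "a1 \<in> fspan {\<alpha>, \<beta>}" "a2 \<in> fspan {\<alpha>, \<beta>}"
  shows "\<exists>k. \<forall>X. wedge [a1, a2] X = k * wedge [\<alpha>, \<beta>] X"
proof -
  obtain s1 t1 where a1: "a1 = (\<lambda>x. s1 * \<alpha> x + t1 * \<beta> x)"
    using assms(1) by (rule fspan_pairE)
  obtain s2 t2 where a2: "a2 = (\<lambda>x. s2 * \<alpha> x + t2 * \<beta> x)"
    using assms(2) by (rule fspan_pairE)
  have "wedge [a1, a2] X = (s1 * t2 - t1 * s2) * wedge [\<alpha>, \<beta>] X" for X
    unfolding a1 a2 wedge_pair by (simp add: algebra_simps)
  then show ?thesis by blast
qed

lemma bideg_2_0_multiple_of_wedge: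
  assumes "\<omega> \<in> bideg (fspan {\<alpha>, \<beta>}) V2 2 0"
  shows "\<exists>K. \<forall>X. \<omega> X = K * wedge [\<alpha>, \<beta>] X"
  using assms unfolding bideg_def
proof (rule fspan_multiples)
  fix g
  assume "g \<in> {wedge (as @ bs) | as bs.
                length as = 2 \<and> set as \<subseteq> fspan {\<alpha>, \<beta>} \<and> length bs = 0 \<and> set bs \<subseteq> V2}"
  then obtain a1 a2 where "g = wedge [a1, a2]" "a1 \<in> fspan {\<alpha>, \<beta>}" "a2 \<in> fspan {\<alpha>, \<beta>}"
    by (auto simp: numeral_2_eq_2 length_Suc_conv)
  then show "\<exists>k. \<forall>X. g X = k * wedge [\<alpha>, \<beta>] X"
    using wedge_pair_in_fspan_pair by blast
qed

lemma coherent_splitting_linear: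
  assumes "coherent_splitting br V1 V2" "\<gamma> \<in> V1"
  shows "linear \<gamma>"
proof -
  have "dual_direct_sum V1 V2"
    using assms(1) unfolding coherent_splitting_def by (elim conjE)
  then have "V1 \<subseteq> dual_space"
    unfolding dual_direct_sum_def dual_subspace_def by (elim conjE)
  then show ?thesis using assms(2) unfolding dual_space_def by blast
qed

lemma coherent_splitting_decompose:
  assumes "coherent_splitting br V1 V2" "linear f"
  obtains a b where "a \<in> V1" "b \<in> V2" "f = (\<lambda>x. a x + b x)"
proof -
  have "dual_direct_sum V1 V2"
    using assms(1) unfolding coherent_splitting_def by (elim conjE)
  then have "\<forall>f\<in>dual_space. \<exists>a\<in>V1. \<exists>b\<in>V2. f = (\<lambda>x. a x + b x)"
    unfolding dual_direct_sum_def by (elim conjE)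
  then show thesis using assms(2) that unfolding dual_space_def by blast
qed

lemma coherent_splitting_d:
  assumes "coherent_splitting br V1 V2" "\<omega> \<in> bideg V1 V2 p q"
  shows "\<exists>a\<in>bideg V1 V2 (p + 1) q. \<exists>b\<in>(if q = 0 then {\<lambda>X. 0} else bideg V1 V2 (p + 2) (q - 1)).
           CE_d br (p + q) \<omega> = (\<lambda>X. a X + b X)"
proof -
  have "\<forall>p q. \<forall>\<omega>\<in>bideg V1 V2 p q.
          \<exists>a\<in>bideg V1 V2 (p + 1) q. \<exists>b\<in>(if q = 0 then {\<lambda>X. 0} else bideg V1 V2 (p + 2) (q - 1)).
            CE_d br (p + q) \<omega> = (\<lambda>X. a X + b X)"
    using assms(1) unfolding coherent_splitting_def by (elim conjE)
  then show ?thesis using assms(2) by blast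
qed

lemma coherent_splitting_d_1_0:
  "coherent_splitting br V1 V2 \<Longrightarrow> \<omega> \<in> bideg V1 V2 1 0 \<Longrightarrow> CE_d br 1 \<omega> \<in> bideg V1 V2 2 0"
  using coherent_splitting_d[of br V1 V2 \<omega> 1 0] by (simp add: numeral_2_eq_2)

lemma coherent_splitting_d_0_1:
  assumes "coherent_splitting br V1 V2" "\<omega> \<in> bideg V1 V2 0 1"
  obtains a b where "a \<in> bideg V1 V2 1 1" "b \<in> bideg V1 V2 2 0"
    and "CE_d br 1 \<omega> = (\<lambda>X. a X + b X)"
  using coherent_splitting_d[OF assms] that by (auto simp: numeral_2_eq_2)

lemma coherent_splitting_bracket_in_first_summand:
  assumes "coherent_splitting br V1 V2" "V1 = fspan {\<alpha>, \<beta>}" "\<gamma> \<in> V1"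
  shows "\<exists>K. \<forall>x y. \<gamma> (br x y) = K * (\<alpha> x * \<beta> y - \<alpha> y * \<beta> x)"
proof -
  have "CE_d br 1 (one_form \<gamma>) \<in> bideg (fspan {\<alpha>, \<beta>}) V2 2 0"
    using coherent_splitting_d_1_0[OF assms(1) one_form_in_bideg_1_0[OF assms(3)]] assms(2)
    by simp
  then obtain K where K: "\<And>X. CE_d br 1 (one_form \<gamma>) X = K * wedge [\<alpha>, \<beta>] X"
    using bideg_2_0_multiple_of_wedge by blast
  have "\<gamma> (br x y) = - K * (\<alpha> x * \<beta> y - \<alpha> y * \<beta> x)" for x y
  proof -
    have "\<gamma> (br x y) = - CE_d br 1 (one_form \<gamma>) (\<lambda>m. if m = 0 then x else y)"
      unfolding CE_d_one_form by simp
    also have "\<dots> = - K * (\<alpha> x * \<beta> y - \<alpha> y * \<beta> x)"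
      unfolding K wedge_pair by simp
    finally show ?thesis .
  qed
  then show ?thesis by blast
qed

lemma nilpotent_iterated_bracket_eventually_zero:
  assumes "nilpotent_lie br"
  shows "\<exists>N. (br u ^^ N) w = 0"
proof -
  obtain N where N: "lower_central br N = {0}"
    using assms unfolding nilpotent_lie_def by blast
  have "(br u ^^ n) w \<in> lower_central br n" for n
    by (induction n) (auto intro: span_base)
  then show ?thesis using N by blast
qed

lemma nilpotent_bracket_projection_vanishes:
  fixes \<alpha> \<beta> :: "'a::real_vector \<Rightarrow> real"
  assumes "nilpotent_lie br" "linear \<alpha>" "linear \<beta>"
    and c1: "\<And>x y. \<alpha> (br x y) = c1 * (\<alpha> x * \<beta> y - \<alpha> y * \<beta> x)"
    and c2: "\<And>x y. \<beta> (br x y) = c2 * (\<alpha> x * \<beta> y - \<alpha> y * \<beta> x)"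
  shows "\<alpha> (br x y) = 0 \<and> \<beta> (br x y) = 0"
proof (rule ccontr)
  define D where "D = \<alpha> x * \<beta> y - \<alpha> y * \<beta> x"
  assume "\<not> ?thesis"
  then have "c1 * D \<noteq> 0 \<or> c2 * D \<noteq> 0" by (simp add: c1 c2 D_def)
  then have "D \<noteq> 0" and "c1 \<noteq> 0 \<or> c2 \<noteq> 0" by auto
  have "\<exists>u. \<alpha> u * c2 - \<beta> u * c1 \<noteq> 0"
  proof (rule ccontr)
    assume "\<not> ?thesis"
    then have x: "\<beta> x * c1 = \<alpha> x * c2" and y: "\<beta> y * c1 = \<alpha> y * c2" by auto
    have "c1 * D = \<alpha> x * (\<beta> y * c1) - \<alpha> y * (\<beta> x * c1)"
      unfolding D_def by (simp add: algebra_simps)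
    also have "\<dots> = 0" unfolding x y by (simp add: algebra_simps)
    finally have "c1 * D = 0" .
    have "c2 * D = \<beta> y * (\<alpha> x * c2) - \<beta> x * (\<alpha> y * c2)"
      unfolding D_def by (simp add: algebra_simps)
    also have "\<dots> = 0" unfolding x[symmetric] y[symmetric] by (simp add: algebra_simps)
    finally have "c2 * D = 0" .
    with \<open>c1 * D = 0\<close> \<open>D \<noteq> 0\<close> \<open>c1 \<noteq> 0 \<or> c2 \<noteq> 0\<close> show False by simp
  qed
  then obtain u where "\<alpha> u * c2 - \<beta> u * c1 \<noteq> 0" by blast
  define \<kappa> where "\<kappa> = \<alpha> u * c2 - \<beta> u * c1"
  have "\<kappa> \<noteq> 0" unfolding \<kappa>_def by fact
  \<comment> \<open>\<open>ad u\<close> multiplies \<open>t\<close> by \<open>\<kappa>\<close> on elements whose \<open>(\<alpha>, \<beta>)\<close>-image is \<open>t (c1, c2)\<close>\<close>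
  have scaling: "\<alpha> ((br u ^^ n) (br x y)) = c1 * D * \<kappa> ^ n \<and>
                 \<beta> ((br u ^^ n) (br x y)) = c2 * D * \<kappa> ^ n" for n
  proof (induction n)
    case 0
    show ?case by (simp add: c1 c2 D_def)
  next
    case (Suc n)
    show ?case
      unfolding funpow.simps comp_apply c1 c2 Suc.IH[THEN conjunct1] Suc.IH[THEN conjunct2]
      by (simp add: \<kappa>_def algebra_simps)
  qed
  obtain N where "(br u ^^ N) (br x y) = 0"
    using nilpotent_iterated_bracket_eventually_zero[OF \<open>nilpotent_lie br\<close>] by blast
  then have "c1 * D * \<kappa> ^ N = 0" "c2 * D * \<kappa> ^ N = 0"
    using scaling[of N] linear_0[OF \<open>linear \<alpha>\<close>] linear_0[OF \<open>linear \<beta>\<close>] by simp_all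
  with \<open>D \<noteq> 0\<close> \<open>\<kappa> \<noteq> 0\<close> have "c1 = 0" "c2 = 0" by simp_all
  with \<open>c1 \<noteq> 0 \<or> c2 \<noteq> 0\<close> show False by simp
qed

lemma coherent_splitting_first_summand_closed:
  assumes "nilpotent_lie br" "coherent_splitting br V1 V2" "\<gamma> \<in> V1"
  shows "\<gamma> (br x y) = 0"
proof -
  have "dual_dim2 V1"
    using assms(2) unfolding coherent_splitting_def by (elim conjE)
  then obtain \<alpha> \<beta> where V1: "V1 = fspan {\<alpha>, \<beta>}"
    unfolding dual_dim2_def by blast
  then have "\<alpha> \<in> V1" "\<beta> \<in> V1" by (auto intro: fspan_base)
  obtain c1 where c1: "\<And>x y. \<alpha> (br x y) = c1 * (\<alpha> x * \<beta> y - \<alpha> y * \<beta> x)"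
    using coherent_splitting_bracket_in_first_summand[OF assms(2) V1 \<open>\<alpha> \<in> V1\<close>] by blast
  obtain c2 where c2: "\<And>x y. \<beta> (br x y) = c2 * (\<alpha> x * \<beta> y - \<alpha> y * \<beta> x)"
    using coherent_splitting_bracket_in_first_summand[OF assms(2) V1 \<open>\<beta> \<in> V1\<close>] by blast
  have "linear \<alpha>" "linear \<beta>"
    using coherent_splitting_linear[OF assms(2)] \<open>\<alpha> \<in> V1\<close> \<open>\<beta> \<in> V1\<close> by blast+
  from assms(1) this c1 c2 have "\<alpha> (br x y) = 0 \<and> \<beta> (br x y) = 0"
    by (rule nilpotent_bracket_projection_vanishes)
  moreover obtain s t where "\<gamma> = (\<lambda>x. s * \<alpha> x + t * \<beta> x)"
    using assms(3) unfolding V1 by (rule fspan_pairE)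
  ultimately show ?thesis by simp
qed

lemma coherent_splitting_annihilator_abelian:
  fixes br :: "'a::real_inner \<Rightarrow> 'a \<Rightarrow> 'a"
  assumes coh: "coherent_splitting br V1 V2"
    and closed: "\<And>\<gamma> x y. \<gamma> \<in> V1 \<Longrightarrow> \<gamma> (br x y) = 0"
    and x: "\<And>\<gamma>. \<gamma> \<in> V1 \<Longrightarrow> \<gamma> x = 0" and y: "\<And>\<gamma>. \<gamma> \<in> V1 \<Longrightarrow> \<gamma> y = 0"
  shows "br x y = 0"
proof -
  have "linear (\<lambda>z. inner z (br x y))"
    using bounded_linear_inner_left bounded_linear.linear by blast
  then obtain a b where "a \<in> V1" "b \<in> V2" and split: "(\<lambda>z. inner z (br x y)) = (\<lambda>z. a z + b z)"
    by (rule coherent_splitting_decompose[OF coh])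
  obtain \<omega>\<^sub>1\<^sub>1 \<omega>\<^sub>2\<^sub>0 where \<omega>: "\<omega>\<^sub>1\<^sub>1 \<in> bideg V1 V2 1 1" "\<omega>\<^sub>2\<^sub>0 \<in> bideg V1 V2 2 0"
      and db: "CE_d br 1 (one_form b) = (\<lambda>X. \<omega>\<^sub>1\<^sub>1 X + \<omega>\<^sub>2\<^sub>0 X)"
    by (rule coherent_splitting_d_0_1[OF coh one_form_in_bideg_0_1[OF \<open>b \<in> V2\<close>]])
  define X where "X = (\<lambda>m::nat. if m = 0 then x else y)"
  have "\<omega>\<^sub>1\<^sub>1 X = 0"
    by (rule bideg_two_form_vanishes_on_annihilator[OF \<omega>(1)]) (auto simp: X_def x y)
  moreover have "\<omega>\<^sub>2\<^sub>0 X = 0"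
    by (rule bideg_two_form_vanishes_on_annihilator[OF \<omega>(2)]) (auto simp: X_def x y)
  ultimately have "CE_d br 1 (one_form b) X = 0" unfolding db by simp
  then have "b (br x y) = 0" unfolding CE_d_one_form by (simp add: X_def)
  then have "inner (br x y) (br x y) = 0" using split closed[OF \<open>a \<in> V1\<close>] by (simp add: fun_eq_iff)
  then show ?thesis by simp
qed

lemma subspace_annihilator:
  assumes "\<And>\<gamma>. \<gamma> \<in> V \<Longrightarrow> linear \<gamma>"
  shows "subspace {x. \<forall>\<gamma>\<in>V. \<gamma> x = 0}"
  unfolding subspace_def using assms by (auto simp: linear_0 linear_add linear_scale)

lemma derived_series_2_zero:
  assumes "subspace h" "\<And>x y. br x y \<in> h" "\<And>x y. x \<in> h \<Longrightarrow> y \<in> h \<Longrightarrow> br x y = 0"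
  shows "derived_series br 2 = {0}"
proof -
  have D1: "derived_series br (Suc 0) \<subseteq> h"
    by (simp, rule span_minimal) (use assms(1,2) in auto)
  have "derived_series br 2 \<subseteq> {0}"
    unfolding numeral_2_eq_2 derived_series.simps(2)[of br "Suc 0"]
    by (rule span_minimal) (use D1 assms(3) in auto)
  then show ?thesis unfolding numeral_2_eq_2 by (auto intro: span_zero)
qed

lemma derived_length_eq_1_or_2:
  fixes br :: "'a::euclidean_space \<Rightarrow> 'a \<Rightarrow> 'a"
  assumes "derived_series br 2 = {0}"
  shows "derived_length br \<in> {1, 2}"
proof -
  have "derived_length br \<le> 2"
    unfolding derived_length_def using assms by (rule Least_le)
  moreover have "derived_series br (derived_length br) = {0}"
    unfolding derived_length_def using assms by (rule LeastI)
  moreover obtain e :: 'a where "e \<in> Basis" using nonempty_Basis by blast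
  then have "derived_series br 0 \<noteq> {0}" using nonzero_Basis by auto
  ultimately have "derived_length br \<noteq> 0" by metis
  with \<open>derived_length br \<le> 2\<close> show ?thesis by auto
qed

theorem lemma4:
  fixes br :: "'a::euclidean_space \<Rightarrow> 'a \<Rightarrow> 'a"
    and V1 V2 :: "('a \<Rightarrow> real) set"
  assumes "lie_algebra br"
    and "nilpotent_lie br"
    and "DIM('a) = 6"
    and "coherent_splitting br V1 V2"
  shows "(\<forall>\<alpha>\<in>V1. CE_d br 1 (one_form \<alpha>) = (\<lambda>X. 0)) \<and> derived_length br \<in> {1, 2}"
proof -
  have closed: "\<gamma> (br x y) = 0" if "\<gamma> \<in> V1" for \<gamma> x y
    using coherent_splitting_first_summand_closed[OF assms(2,4) that] .
  define h where "h = {x. \<forall>\<gamma>\<in>V1. \<gamma> x = 0}"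
  have "subspace h"
    unfolding h_def using coherent_splitting_linear[OF assms(4)] by (rule subspace_annihilator)
  moreover have "br x y \<in> h" for x y using closed by (simp add: h_def)
  moreover have "br x y = 0" if "x \<in> h" "y \<in> h" for x y
    by (rule coherent_splitting_annihilator_abelian[OF assms(4)]) (use closed that in \<open>auto simp: h_def\<close>)
  ultimately have "derived_series br 2 = {0}" by (rule derived_series_2_zero)
  then have "derived_length br \<in> {1, 2}" by (rule derived_length_eq_1_or_2)
  moreover have "CE_d br 1 (one_form \<gamma>) = (\<lambda>X. 0)" if "\<gamma> \<in> V1" for \<gamma>
    unfolding fun_eq_iff CE_d_one_form using closed[OF that] by simp
  ultimately show ?thesis by blast
qed

end
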